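(* Consider the Stochastic Asynchronous PALM algorithm under assumptions (S1)–(S4), with $\{j_k\}$ i.i.d. uniform on $\{1,\dots,m\}$, $\sigma(j_k)$ independent of $\mathcal F_k:=\sigma(x^1,\dots,x^k)$, and $x^{k-d_k}$ $\mathcal F_k$-measurable for every $k$. For $j\in\{1,\dots,m\}$ and $k\in\mathbb N$ let $w^k_j:=\zeta_j(x^k_j-\gamma^k_j\nabla_jf(x^{k-d_k}),\gamma^k_j)$ and $w^k=(w^k_1,\dots,w^k_m)$. Then for all $k\in\mathbb N$, almost surely, $$\mathbb E\big[\Phi_s(x^{k+1},x^k,\dots,x^{k-\tau+1})\mid\mathcal F_k\big]+\frac1{2m}\sum_{j=1}^m\Big(\frac1{\gamma^k_j}-L_j(x^k_{-j})-\frac{2M\tau}{\sqrt m}\Big)\|w^k_j-x^k_j\|^2\le\Phi_s(x^k,x^{k-1},\dots,x^{k-\tau}).$$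
   Context: Let $\mathcal H=\mathcal H_1\times\cdots\times\mathcal H_m$ be a product of finite-dimensional real Euclidean spaces with $\langle x,y\rangle=\sum_j\langle x_j,y_j\rangle$; $x_{-j}$ denotes $x$ with its $j$th block removed and $(x_{-j};y)$ the point with $j$th block replaced by $y$. Let $f:\mathcal H\to\mathbb R$ be $C^1$, $r_j:\mathcal H_j\to(-\infty,\infty]$ proper lower semicontinuous, $r(x)=\sum_j r_j(x_j)$, $\Psi=f+r$ bounded below. $r$ is prox-bounded: there is $\lambda_r>0$ with $\operatorname{argmin}_y\{r(y)+\frac1{2\lambda}\|x-y\|^2\}\ne\emptyset$ for all $x$ and $0<\lambda\le\lambda_r$. For each $j$ there is $L_j:\mathcal H_{-j}\to(0,\infty)$ such that $y\mapsto\nabla_jf(x_{-j};y)$ is $L_j(x_{-j})$-Lipschitz for all $x$. Everything lives on a probability space, $\mathcal H$ carrying its Borel $\sigma$-algebra. Delays: an integer $\tau\ge1$ and $d_k\in\{0,\dots,\tau\}^m$; $x^{k-d_k}:=(x_1^{k-d_{k,1}},\dots,x_m^{k-d_{k,m}})$ with $x^i_j=x^0_j$ for $i\le0$ (and $x^i=x^0$ for $i<0$). Stochastic Asynchronous PALM: choose $x^0\in\mathcal H$, $c\in(0,1)$, $M>0$. For each $k$: sample $j_k\in\{1,\dots,m\}$; set $\gamma^k_j=\min\{c(L_j(x^{k-d_k}_{-j})+2M\tau/\sqrt m)^{-1},\lambda_r\}$; set $x^{k+1}_{j_k}=\zeta_{j_k}(x^k_{j_k}-\gamma^k_{j_k}\nabla_{j_k}f(x^{k-d_k}),\gamma^k_{j_k})$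 and $x^{k+1}_j=x^k_j$ for $j\ne j_k$. (S1) each $L_j$ is measurable. (S2) each $\zeta_j:\mathcal H_j\times(0,\infty)\to\mathcal H_j$ is measurable with $\zeta_j(v,\gamma)\in\operatorname{argmin}_u\{r_j(u)+\frac1{2\gamma}\|u-v\|^2\}$. (S3) there is $L>0$ with $\sup_kL_j(x^{k-d_k}_{-j})\le L$ for all $j$, a.s. (S4) $\|\nabla f(x^k)-\nabla f(x^{k-d_k})\|\le M\|x^k-x^{k-d_k}\|$ for all $k$, a.s. Stochastic Lyapunov function $\Phi_s:\mathcal H^{1+\tau}\to(-\infty,\infty]$: $\Phi_s(x(0),\dots,x(\tau))=f(x(0))+r(x(0))+\frac{M}{2\sqrt m}\sum_{h=1}^\tau(\tau-h+1)\|x(h)-x(h-1)\|^2$. *)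

theory Defs
  imports "HOL-Analysis.Analysis" "HOL-Probability.Probability"
begin

text \<open>The product space H = H_1 x ... x H_m is modelled as a Euclidean space 'a whose
  orthonormal Basis is partitioned into blocks B 1, ..., B m; H_j = span (B j).\<close>

definition blk :: "(nat \<Rightarrow> 'a set) \<Rightarrow> nat \<Rightarrow> 'a::euclidean_space \<Rightarrow> 'a" where
  "blk B j x = (\<Sum>b\<in>B j. (x \<bullet> b) *\<^sub>R b)"

text \<open>(x_{-j}; y): replace the j-th block of x by y (y in H_j).  The point x_{-j} of
  H_{-j} is represented by x - blk B j x.\<close>
definition repl :: "(nat \<Rightarrow> 'a set) \<Rightarrow> nat \<Rightarrow> 'a::euclidean_space \<Rightarrow> 'a \<Rightarrow> 'a" where
  "repl B j x y = x - blk B j x + blk B j y"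

definition is_block_partition :: "(nat \<Rightarrow> 'a::euclidean_space set) \<Rightarrow> nat \<Rightarrow> bool" where
  "is_block_partition B m \<longleftrightarrow>
     (\<forall>i\<in>{1..m}. B i \<subseteq> Basis) \<and>
     (\<forall>i\<in>{1..m}. \<forall>i'\<in>{1..m}. i \<noteq> i' \<longrightarrow> B i \<inter> B i' = {}) \<and>
     (\<Union>i\<in>{1..m}. B i) = Basis"

definition proper_on :: "'a set \<Rightarrow> ('a \<Rightarrow> ereal) \<Rightarrow> bool" where
  "proper_on S h \<longleftrightarrow> (\<forall>u\<in>S. h u \<noteq> -\<infinity>) \<and> (\<exists>u\<in>S. h u \<noteq> \<infinity>)"

definition lsc_on :: "'a::topological_space set \<Rightarrow> ('a \<Rightarrow> ereal) \<Rightarrow> bool" where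
  "lsc_on S h \<longleftrightarrow> (\<forall>t::real. closed {u\<in>S. h u \<le> ereal t})"

definition rsum :: "(nat \<Rightarrow> 'a set) \<Rightarrow> nat \<Rightarrow> (nat \<Rightarrow> 'a \<Rightarrow> ereal) \<Rightarrow> 'a::euclidean_space \<Rightarrow> ereal" where
  "rsum B m r x = (\<Sum>j\<in>{1..m}. r j (blk B j x))"

definition Psi :: "(nat \<Rightarrow> 'a set) \<Rightarrow> nat \<Rightarrow> ('a \<Rightarrow> real) \<Rightarrow> (nat \<Rightarrow> 'a \<Rightarrow> ereal) \<Rightarrow> 'a::euclidean_space \<Rightarrow> ereal" where
  "Psi B m f r x = ereal (f x) + rsum B m r x"

definition Phi_s :: "(nat \<Rightarrow> 'a set) \<Rightarrow> nat \<Rightarrow> ('a \<Rightarrow> real) \<Rightarrow> (nat \<Rightarrow> 'a \<Rightarrow> ereal) \<Rightarrow> real \<Rightarrow> nat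
      \<Rightarrow> (nat \<Rightarrow> 'a::euclidean_space) \<Rightarrow> ereal" where
  "Phi_s B m f r Mc \<tau> y = Psi B m f r (y 0)
     + ereal (Mc / (2 * sqrt (real m)) * (\<Sum>h\<in>{1..\<tau>}. real (\<tau> - h + 1) * (norm (y h - y (h - 1)))\<^sup>2))"

text \<open>Delayed iterate x^{k-d_k}: block j taken from x^{k - d_{k,j}} (nat subtraction
  realises the convention x^i = x^0 for i \<le> 0).\<close>
definition delayed :: "(nat \<Rightarrow> 'a set) \<Rightarrow> nat \<Rightarrow> (nat \<Rightarrow> 'w \<Rightarrow> 'a::euclidean_space)
      \<Rightarrow> (nat \<Rightarrow> 'w \<Rightarrow> nat \<Rightarrow> nat) \<Rightarrow> nat \<Rightarrow> 'w \<Rightarrow> 'a" where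
  "delayed B m x d k \<omega> = (\<Sum>j\<in>{1..m}. blk B j (x (k - d k \<omega> j) \<omega>))"

definition gam :: "(nat \<Rightarrow> 'a set) \<Rightarrow> nat \<Rightarrow> (nat \<Rightarrow> 'a \<Rightarrow> real) \<Rightarrow> real \<Rightarrow> real \<Rightarrow> nat \<Rightarrow> real
      \<Rightarrow> (nat \<Rightarrow> 'w \<Rightarrow> 'a::euclidean_space) \<Rightarrow> (nat \<Rightarrow> 'w \<Rightarrow> nat \<Rightarrow> nat) \<Rightarrow> nat \<Rightarrow> 'w \<Rightarrow> nat \<Rightarrow> real" where
  "gam B m L c Mc \<tau> lam x d k \<omega> j =
     (let z = delayed B m x d k \<omega>
      in min (c / (L j (z - blk B j z) + 2 * Mc * real \<tau> / sqrt (real m))) lam)"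

definition wblk :: "(nat \<Rightarrow> 'a set) \<Rightarrow> nat \<Rightarrow> ('a \<Rightarrow> 'a) \<Rightarrow> (nat \<Rightarrow> 'a \<Rightarrow> real \<Rightarrow> 'a)
      \<Rightarrow> (nat \<Rightarrow> 'a \<Rightarrow> real) \<Rightarrow> real \<Rightarrow> real \<Rightarrow> nat \<Rightarrow> real
      \<Rightarrow> (nat \<Rightarrow> 'w \<Rightarrow> 'a::euclidean_space) \<Rightarrow> (nat \<Rightarrow> 'w \<Rightarrow> nat \<Rightarrow> nat) \<Rightarrow> nat \<Rightarrow> 'w \<Rightarrow> nat \<Rightarrow> 'a" where
  "wblk B m g \<zeta> L c Mc \<tau> lam x d k \<omega> j =
     (let \<gamma> = gam B m L c Mc \<tau> lam x d k \<omega> j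
      in \<zeta> j (blk B j (x k \<omega>) - \<gamma> *\<^sub>R blk B j (g (delayed B m x d k \<omega>))) \<gamma>)"

definition nat_filtration :: "'w measure \<Rightarrow> (nat \<Rightarrow> 'w \<Rightarrow> 'a::topological_space) \<Rightarrow> nat \<Rightarrow> 'w measure" where
  "nat_filtration M X k =
     sigma (space M) {X i -` A \<inter> space M | i A. i \<in> {1..k} \<and> A \<in> sets borel}"

text \<open>Conditional expectation of an extended-real random variable bounded below by c:
  E[X | F] = c + E[X - c | F], with the library's nonnegative conditional expectation.\<close>
definition cond_exp_lb :: "'w measure \<Rightarrow> 'w measure \<Rightarrow> real \<Rightarrow> ('w \<Rightarrow> ereal) \<Rightarrow> 'w \<Rightarrow> ereal" where
  "cond_exp_lb M F c X \<omega> =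
     ereal c + enn2ereal (nn_cond_exp M F (\<lambda>\<eta>. e2ennreal (X \<eta> - ereal c)) \<omega>)"

end

theory Submission
  imports Defs
begin

text \<open>
  Given the past, the index j_k is uniform on {1..m} and independent of F_k, so
  E[\<Phi>_s(x^{k+1}, ..., x^{k-\<tau>+1}) | F_k] is the plain average over i of the F_k-measurable values
  \<Phi>_i obtained by updating block i. For a single block, the descent lemma for f and the prox
  inequality for r_i give the usual sufficient decrease, up to the error term
  \<langle>\<nabla>f(x^k) - \<nabla>f(x^{k-d_k}), \<Delta>_i\<rangle> with \<Delta>_i = w_i - x^k_i. Summed over the blocks, these errors form one inner
  product \<langle>e, \<Sigma>_i \<Delta>_i\<rangle>, with the \<Delta>_i pairwise orthogonal and
  \<parallel>e\<parallel> \<le> M \<Sigma>_h \<parallel>x^{k-h+1} - x^{k-h}\<parallel> by (S4) and telescoping the delays. Young's inequality with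
  weight \<surd>m splits it into a multiple of \<tau>\<parallel>\<Delta>_i\<parallel>^2, paid for by the step size, and the squared
  increments, paid for by shifting the weights \<tau> - h + 1 of \<Phi>_s down by one.
\<close>

section \<open>Block decomposition\<close>

lemma linear_blk: "linear (blk B j)"
  unfolding blk_def
  by (intro linear_compose_sum) (auto intro!: linearI simp: inner_add_left scaleR_add_left)

lemmas blk_add = linear_add[OF linear_blk]
  and blk_diff = linear_diff[OF linear_blk]
  and blk_scaleR = linear_scale[OF linear_blk]
  and blk_0 = linear_0[OF linear_blk]
  and blk_sum = linear_sum[OF linear_blk]

lemma continuous_blk: "continuous (at x) (blk B j)"
  using linear_blk[unfolded linear_conv_bounded_linear] by (rule linear_continuous_at)

lemma borel_measurable_blk [measurable]: "blk B j \<in> borel_measurable borel"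
  by (intro borel_measurable_continuous_onI continuous_at_imp_continuous_on ballI continuous_blk)

lemma blk_in_span: "blk B j x \<in> span (B j)"
  unfolding blk_def by (intro span_sum span_scale span_base) auto

lemma inner_blk_commute: "blk B j v \<bullet> w = v \<bullet> blk B j w"
  unfolding blk_def by (simp add: inner_sum_left inner_sum_right inner_commute mult.commute)

locale block_partition =
  fixes B :: "nat \<Rightarrow> 'a::euclidean_space set" and m :: nat
  assumes partition: "is_block_partition B m"
begin

lemma block_subset_Basis: "i \<in> {1..m} \<Longrightarrow> B i \<subseteq> Basis"
  using partition unfolding is_block_partition_def by blast

lemma block_unique: "i \<in> {1..m} \<Longrightarrow> l \<in> {1..m} \<Longrightarrow> b \<in> B i \<Longrightarrow> b \<in> B l \<Longrightarrow> i = l"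
  using partition unfolding is_block_partition_def by blast

lemma Basis_in_block: "b \<in> Basis \<Longrightarrow> \<exists>i\<in>{1..m}. b \<in> B i"
  using partition unfolding is_block_partition_def by blast

lemma inner_blk_Basis:
  assumes i: "i \<in> {1..m}" and b: "b \<in> Basis"
  shows "blk B i x \<bullet> b = (if b \<in> B i then x \<bullet> b else 0)"
proof -
  have fin: "finite (B i)"
    using block_subset_Basis[OF i] finite_Basis by (rule finite_subset)
  have "blk B i x \<bullet> b = (\<Sum>b'\<in>B i. if b' = b then x \<bullet> b else 0)"
    unfolding blk_def inner_sum_left
    by (rule sum.cong) (use block_subset_Basis[OF i] b in \<open>auto simp: inner_Basis\<close>)
  then show ?thesis
    using fin by simp
qed

lemma blk_eq_self:
  assumes i: "i \<in> {1..m}" and y: "y \<in> span (B i)"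
  shows "blk B i y = y"
  using y
proof (induction rule: span_induct_alt)
  case base
  then show ?case by (simp add: blk_0)
next
  case (step c b y)
  have "blk B i b = b"
  proof (rule euclidean_eqI)
    fix b' :: 'a assume b': "b' \<in> Basis"
    show "blk B i b \<bullet> b' = b \<bullet> b'"
      unfolding inner_blk_Basis[OF i b'] using step.hyps b' block_subset_Basis[OF i]
      by (auto simp: inner_Basis)
  qed
  then show ?case by (simp add: blk_add blk_scaleR step.IH)
qed

lemma blk_idem: "i \<in> {1..m} \<Longrightarrow> blk B i (blk B i x) = blk B i x"
  by (rule blk_eq_self[OF _ blk_in_span])

lemma blk_other_block:
  assumes i: "i \<in> {1..m}" and l: "l \<in> {1..m}" "i \<noteq> l" and y: "y \<in> span (B i)"
  shows "blk B l y = 0"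
proof (rule euclidean_eqI)
  fix b :: 'a assume b: "b \<in> Basis"
  show "blk B l y \<bullet> b = 0 \<bullet> b"
  proof (cases "b \<in> B l")
    case True
    then have "b \<notin> B i" using block_unique[OF i l(1)] l(2) by blast
    then have "y \<bullet> b = 0" using inner_blk_Basis[OF i b, of y] blk_eq_self[OF i y] by simp
    then show ?thesis using True by (simp add: inner_blk_Basis[OF l(1) b])
  qed (simp add: inner_blk_Basis[OF l(1) b])
qed

lemma inner_sum_blk_Basis:
  assumes S: "S \<subseteq> {1..m}" and b: "b \<in> Basis"
  shows "(\<Sum>l\<in>S. blk B l u) \<bullet> b = (if \<exists>l\<in>S. b \<in> B l then u \<bullet> b else 0)"
proof -
  obtain i where i: "i \<in> {1..m}" "b \<in> B i" using Basis_in_block[OF b] by blast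
  have "(\<Sum>l\<in>S. blk B l u) \<bullet> b = (\<Sum>l\<in>S. if l = i then u \<bullet> b else 0)"
    unfolding inner_sum_left
  proof (intro sum.cong refl)
    fix l assume "l \<in> S"
    then have l: "l \<in> {1..m}" using S by blast
    have "b \<in> B l \<longleftrightarrow> l = i" using block_unique[OF l i(1) _ i(2)] i(2) by blast
    then show "blk B l u \<bullet> b = (if l = i then u \<bullet> b else 0)"
      by (simp add: inner_blk_Basis[OF l b])
  qed
  moreover have "(\<exists>l\<in>S. b \<in> B l) \<longleftrightarrow> i \<in> S"
    using S i block_unique by blast
  ultimately show ?thesis
    using finite_subset[OF S] by simp
qed

lemma sum_blk: "(\<Sum>i\<in>{1..m}. blk B i x) = x"
  by (rule euclidean_eqI) (use Basis_in_block in \<open>auto simp: inner_sum_blk_Basis\<close>)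

lemma norm_sum_blk_le: "S \<subseteq> {1..m} \<Longrightarrow> norm (\<Sum>l\<in>S. blk B l u) \<le> norm u"
  by (rule norm_le_componentwise) (simp add: inner_sum_blk_Basis)

lemma norm_sq_eq_sum_blk: "(norm x)\<^sup>2 = (\<Sum>i\<in>{1..m}. (norm (blk B i x))\<^sup>2)"
proof -
  have sq_coords: "(norm y)\<^sup>2 = (\<Sum>b\<in>Basis. (y \<bullet> b)\<^sup>2)" for y :: 'a
    unfolding power2_norm_eq_inner euclidean_inner[of y y] by (simp add: power2_eq_square)
  have "(norm x)\<^sup>2 = (\<Sum>b\<in>(\<Union>i\<in>{1..m}. B i). (x \<bullet> b)\<^sup>2)"
    using partition unfolding sq_coords is_block_partition_def by simp
  also have "\<dots> = (\<Sum>i\<in>{1..m}. \<Sum>b\<in>B i. (x \<bullet> b)\<^sup>2)"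
  proof (rule sum.UNION_disjoint)
    show "\<forall>i\<in>{1..m}. finite (B i)"
      using block_subset_Basis finite_Basis finite_subset by blast
    show "\<forall>i\<in>{1..m}. \<forall>l\<in>{1..m}. i \<noteq> l \<longrightarrow> B i \<inter> B l = {}"
      using block_unique by blast
  qed simp
  also have "\<dots> = (\<Sum>i\<in>{1..m}. (norm (blk B i x))\<^sup>2)"
  proof (intro sum.cong refl)
    fix i assume i: "i \<in> {1..m}"
    have "(norm (blk B i x))\<^sup>2 = (\<Sum>b\<in>Basis. if b \<in> B i then (x \<bullet> b)\<^sup>2 else 0)"
      unfolding sq_coords by (intro sum.cong refl) (simp add: inner_blk_Basis[OF i])
    also have "\<dots> = (\<Sum>b\<in>B i. (x \<bullet> b)\<^sup>2)"
      using block_subset_Basis[OF i] by (simp add: sum.If_cases Int_absorb1)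
    finally show "(\<Sum>b\<in>B i. (x \<bullet> b)\<^sup>2) = (norm (blk B i x))\<^sup>2" ..
  qed
  finally show ?thesis .
qed

lemma norm_sq_sum_blocks:
  assumes "\<forall>i\<in>{1..m}. \<Delta> i \<in> span (B i)"
  shows "(norm (\<Sum>i\<in>{1..m}. \<Delta> i))\<^sup>2 = (\<Sum>i\<in>{1..m}. (norm (\<Delta> i))\<^sup>2)"
proof -
  have blk_sum_\<Delta>: "blk B l (\<Sum>i\<in>{1..m}. \<Delta> i) = \<Delta> l" if l: "l \<in> {1..m}" for l
  proof -
    have "blk B l (\<Sum>i\<in>{1..m}. \<Delta> i) = (\<Sum>i\<in>{1..m}. if i = l then \<Delta> l else 0)"
      unfolding blk_sum
      by (intro sum.cong refl) (use assms l in \<open>auto simp: blk_eq_self blk_other_block\<close>)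
    then show ?thesis using l by simp
  qed
  show ?thesis
    unfolding norm_sq_eq_sum_blk[of "\<Sum>i\<in>{1..m}. \<Delta> i"]
    using blk_sum_\<Delta> by (intro sum.cong refl) presburger
qed

lemma inner_blk_of_span: "i \<in> {1..m} \<Longrightarrow> h \<in> span (B i) \<Longrightarrow> v \<bullet> h = blk B i v \<bullet> h"
  by (simp add: inner_blk_commute blk_eq_self)

lemma blk_repl_same: "i \<in> {1..m} \<Longrightarrow> y \<in> span (B i) \<Longrightarrow> blk B i (repl B i z y) = y"
  unfolding repl_def by (simp add: blk_add blk_diff blk_idem blk_eq_self)

lemma blk_repl_other:
  "i \<in> {1..m} \<Longrightarrow> l \<in> {1..m} \<Longrightarrow> l \<noteq> i \<Longrightarrow> blk B l (repl B i z y) = blk B l z"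
  unfolding repl_def by (simp add: blk_add blk_diff blk_other_block blk_in_span)

lemma repl_eq: "i \<in> {1..m} \<Longrightarrow> y \<in> span (B i) \<Longrightarrow> repl B i z y = z - blk B i z + y"
  unfolding repl_def by (simp add: blk_eq_self)

end

section \<open>One block update\<close>

lemma has_real_derivative_along_line:
  assumes "(f has_derivative (\<lambda>v. g (z + t *\<^sub>R h) \<bullet> v)) (at (z + t *\<^sub>R h))"
  shows "((\<lambda>t. f (z + t *\<^sub>R h)) has_real_derivative g (z + t *\<^sub>R h) \<bullet> h) (at t)"
proof (rule has_derivative_imp_has_field_derivative)
  have "((\<lambda>t. z + t *\<^sub>R h) has_derivative (\<lambda>s. s *\<^sub>R h)) (at t)"
    by (auto intro!: derivative_eq_intros)
  from diff_chain_at[OF this assms]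
  show "((\<lambda>t. f (z + t *\<^sub>R h)) has_derivative (\<lambda>s. g (z + t *\<^sub>R h) \<bullet> (s *\<^sub>R h))) (at t)"
    by (simp add: o_def)
qed simp

lemma prox_inequality_linearized:
  fixes a w G :: "'a::real_inner" and ra rw :: ereal
  assumes \<gamma>: "0 < \<gamma>"
    and prox: "rw + ereal ((norm (w - (a - \<gamma> *\<^sub>R G)))\<^sup>2 / (2 * \<gamma>))
      \<le> ra + ereal ((norm (a - (a - \<gamma> *\<^sub>R G)))\<^sup>2 / (2 * \<gamma>))"
  shows "rw \<le> ra + ereal (- (norm (w - a))\<^sup>2 / (2 * \<gamma>) - (w - a) \<bullet> G)"
proof -
  have "(norm (w - (a - \<gamma> *\<^sub>R G)))\<^sup>2
      = (norm (w - a))\<^sup>2 + (norm (\<gamma> *\<^sub>R G))\<^sup>2 + 2 * (\<gamma> * ((w - a) \<bullet> G))"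
    using dot_norm[of "w - a" "\<gamma> *\<^sub>R G"] by (simp add: algebra_simps)
  then have "(norm (w - (a - \<gamma> *\<^sub>R G)))\<^sup>2 / (2 * \<gamma>)
      = (norm (a - (a - \<gamma> *\<^sub>R G)))\<^sup>2 / (2 * \<gamma>) + ((norm (w - a))\<^sup>2 / (2 * \<gamma>) + (w - a) \<bullet> G)"
    using \<gamma> by (simp add: field_simps)
  with prox show ?thesis
    by (cases rw; cases ra) auto
qed

context block_partition
begin

lemma inner_grad_increment_le:
  assumes lip: "\<And>y y'. y \<in> span (B i) \<Longrightarrow> y' \<in> span (B i) \<Longrightarrow>
      norm (blk B i (g (repl B i z y)) - blk B i (g (repl B i z y'))) \<le> Lz * norm (y - y')"
    and i: "i \<in> {1..m}" and h: "h \<in> span (B i)" and t: "0 \<le> t"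
  shows "(g (z + t *\<^sub>R h) - g z) \<bullet> h \<le> Lz * t * (norm h)\<^sup>2"
proof -
  have bz: "blk B i z \<in> span (B i)" by (rule blk_in_span)
  have th: "blk B i z + t *\<^sub>R h \<in> span (B i)" using bz h by (intro span_add span_scale)
  have "(g (z + t *\<^sub>R h) - g z) \<bullet> h = blk B i (g (z + t *\<^sub>R h) - g z) \<bullet> h"
    by (rule inner_blk_of_span[OF i h])
  also have "\<dots> \<le> norm (blk B i (g (z + t *\<^sub>R h) - g z)) * norm h"
    by (rule norm_cauchy_schwarz)
  also have "\<dots> \<le> Lz * norm (t *\<^sub>R h) * norm h"
    using lip[OF th bz] repl_eq[OF i th] repl_eq[OF i bz]
    by (intro mult_right_mono) (simp_all add: blk_diff)
  also have "\<dots> = Lz * t * (norm h)\<^sup>2"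
    using t by (simp add: power2_eq_square)
  finally show ?thesis .
qed

lemma block_descent:
  assumes grad: "\<And>y. (f has_derivative (\<lambda>v. g y \<bullet> v)) (at y)"
    and lip: "\<And>y y'. y \<in> span (B i) \<Longrightarrow> y' \<in> span (B i) \<Longrightarrow>
      norm (blk B i (g (repl B i z y)) - blk B i (g (repl B i z y'))) \<le> Lz * norm (y - y')"
    and i: "i \<in> {1..m}" and y: "y \<in> span (B i)"
  shows "f (repl B i z y) \<le> f z + g z \<bullet> (y - blk B i z) + Lz / 2 * (norm (y - blk B i z))\<^sup>2"
proof -
  define h where "h = y - blk B i z"
  have h: "h \<in> span (B i)" unfolding h_def by (intro span_diff y blk_in_span)
  define \<phi> where "\<phi> t = f (z + t *\<^sub>R h) - t * (g z \<bullet> h) - Lz / 2 * (t\<^sup>2 * (norm h)\<^sup>2)" for t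
  have "(\<phi> has_real_derivative (g (z + t *\<^sub>R h) - g z) \<bullet> h - Lz * t * (norm h)\<^sup>2) (at t)" for t
    unfolding \<phi>_def
    by (auto intro!: derivative_eq_intros has_real_derivative_along_line grad
        simp: algebra_simps)
  then have "\<phi> 1 \<le> \<phi> 0"
    using inner_grad_increment_le[OF lip i h]
    by (intro DERIV_nonpos_imp_nonincreasing[of 0 1 \<phi>]) force+
  moreover have "repl B i z y = z + h"
    unfolding h_def using repl_eq[OF i y] by simp
  ultimately show ?thesis
    unfolding \<phi>_def h_def by simp
qed

lemma rsum_repl:
  assumes i: "i \<in> {1..m}" and w: "w \<in> span (B i)"
  shows "rsum B m r (repl B i x w) = r i w + (\<Sum>l\<in>{1..m} - {i}. r l (blk B l x))"
    and "rsum B m r x = r i (blk B i x) + (\<Sum>l\<in>{1..m} - {i}. r l (blk B l x))"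
proof -
  have "(\<Sum>l\<in>{1..m} - {i}. r l (blk B l (repl B i x w))) = (\<Sum>l\<in>{1..m} - {i}. r l (blk B l x))"
  proof (intro sum.cong refl)
    fix l assume "l \<in> {1..m} - {i}"
    then show "r l (blk B l (repl B i x w)) = r l (blk B l x)"
      using blk_repl_other[OF i, of l x w] by simp
  qed
  moreover have "rsum B m r y = r i (blk B i y) + (\<Sum>l\<in>{1..m} - {i}. r l (blk B l y))" for y
    unfolding rsum_def using i by (intro sum.remove) simp_all
  ultimately show "rsum B m r (repl B i x w) = r i w + (\<Sum>l\<in>{1..m} - {i}. r l (blk B l x))"
    and "rsum B m r x = r i (blk B i x) + (\<Sum>l\<in>{1..m} - {i}. r l (blk B l x))"
    by (simp_all add: blk_repl_same[OF i w])
qed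

text \<open>The forward step uses the gradient at a possibly stale point zd.\<close>
lemma Psi_repl_le:
  assumes grad: "\<And>y. (f has_derivative (\<lambda>v. g y \<bullet> v)) (at y)"
    and lip: "\<And>y y'. y \<in> span (B i) \<Longrightarrow> y' \<in> span (B i) \<Longrightarrow>
      norm (blk B i (g (repl B i x y)) - blk B i (g (repl B i x y'))) \<le> Lx * norm (y - y')"
    and i: "i \<in> {1..m}" and \<gamma>: "0 < \<gamma>" and w: "w \<in> span (B i)"
    and prox: "r i w + ereal ((norm (w - (blk B i x - \<gamma> *\<^sub>R blk B i (g zd))))\<^sup>2 / (2 * \<gamma>))
      \<le> r i (blk B i x) + ereal ((norm (blk B i x - (blk B i x - \<gamma> *\<^sub>R blk B i (g zd))))\<^sup>2 / (2 * \<gamma>))"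
  shows "Psi B m f r (repl B i x w) \<le> Psi B m f r x + ereal (- (norm (w - blk B i x))\<^sup>2 / (2 * \<gamma>)
      + Lx / 2 * (norm (w - blk B i x))\<^sup>2 + (g x - g zd) \<bullet> (w - blk B i x))"
proof -
  define \<Delta> where "\<Delta> = w - blk B i x"
  define R where "R = (\<Sum>l\<in>{1..m} - {i}. r l (blk B l x))"
  have \<Delta>: "\<Delta> \<in> span (B i)" unfolding \<Delta>_def by (intro span_diff w blk_in_span)
  have f_le: "f (repl B i x w) \<le> f x + g x \<bullet> \<Delta> + Lx / 2 * (norm \<Delta>)\<^sup>2"
    unfolding \<Delta>_def by (rule block_descent[OF grad lip i w])
  have "r i w \<le> r i (blk B i x) + ereal (- (norm \<Delta>)\<^sup>2 / (2 * \<gamma>) - \<Delta> \<bullet> blk B i (g zd))"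
    unfolding \<Delta>_def by (rule prox_inequality_linearized[OF \<gamma> prox])
  also have "\<Delta> \<bullet> blk B i (g zd) = g zd \<bullet> \<Delta>"
    using inner_blk_of_span[OF i \<Delta>, of "g zd"] by (simp add: inner_commute)
  finally have r_le: "r i w \<le> r i (blk B i x) + ereal (- (norm \<Delta>)\<^sup>2 / (2 * \<gamma>) - g zd \<bullet> \<Delta>)" .
  have "Psi B m f r (repl B i x w) = ereal (f (repl B i x w)) + (r i w + R)"
    unfolding Psi_def R_def rsum_repl(1)[OF i w] ..
  also have "\<dots> \<le> ereal (f x + g x \<bullet> \<Delta> + Lx / 2 * (norm \<Delta>)\<^sup>2)
      + (r i (blk B i x) + ereal (- (norm \<Delta>)\<^sup>2 / (2 * \<gamma>) - g zd \<bullet> \<Delta>) + R)"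
    using f_le r_le by (intro add_mono) simp_all
  also have "\<dots> = Psi B m f r x + ereal (- (norm \<Delta>)\<^sup>2 / (2 * \<gamma>) + Lx / 2 * (norm \<Delta>)\<^sup>2 + (g x - g zd) \<bullet> \<Delta>)"
    unfolding Psi_def R_def rsum_repl(2)[OF i w]
    by (cases "r i (blk B i x)"; cases "\<Sum>l\<in>{1..m} - {i}. r l (blk B l x)") (simp_all add: inner_diff_left)
  finally show ?thesis unfolding \<Delta>_def .
qed

end

section \<open>Averaging over the blocks\<close>

lemma (in block_partition) norm_diff_delayed_le:
  fixes X :: "nat \<Rightarrow> 'a" and dd :: "nat \<Rightarrow> nat"
  assumes delay: "\<And>l. l \<in> {1..m} \<Longrightarrow> dd l \<le> \<tau>"
  shows "norm (X k - (\<Sum>l\<in>{1..m}. blk B l (X (k - dd l))))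
     \<le> (\<Sum>h\<in>{1..\<tau>}. norm (X (k - h) - X (k - (h - 1))))"
proof -
  define u where "u h = X (k - (h - 1)) - X (k - h)" for h
  have telescope: "X k - X (k - dd l) = (\<Sum>h\<in>{1..\<tau>}. if h \<le> dd l then u h else 0)"
    if l: "l \<in> {1..m}" for l
  proof -
    have "(\<Sum>h\<in>{1..\<tau>}. if h \<le> dd l then u h else 0) = (\<Sum>h\<in>{h\<in>{1..\<tau>}. h \<le> dd l}. u h)"
      by (rule sum.inter_filter[symmetric]) simp
    also have "{h\<in>{1..\<tau>}. h \<le> dd l} = {Suc 0..dd l}"
      using delay[OF l] by auto
    also have "(\<Sum>h\<in>{Suc 0..dd l}. u h) = X k - X (k - dd l)"
      using sum_telescope''[of 0 "dd l" "\<lambda>h. - X (k - h)"] by (simp add: u_def)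
    finally show ?thesis ..
  qed
  have "X k - (\<Sum>l\<in>{1..m}. blk B l (X (k - dd l))) = (\<Sum>l\<in>{1..m}. blk B l (X k - X (k - dd l)))"
    using sum_blk[of "X k"] by (simp add: blk_diff sum_subtractf)
  also have "\<dots> = (\<Sum>l\<in>{1..m}. \<Sum>h\<in>{1..\<tau>}. if h \<le> dd l then blk B l (u h) else 0)"
  proof (intro sum.cong refl)
    fix l assume l: "l \<in> {1..m}"
    have "blk B l (X k - X (k - dd l)) = (\<Sum>h\<in>{1..\<tau>}. blk B l (if h \<le> dd l then u h else 0))"
      by (simp only: telescope[OF l] blk_sum)
    also have "\<dots> = (\<Sum>h\<in>{1..\<tau>}. if h \<le> dd l then blk B l (u h) else 0)"
      by (intro sum.cong refl) (simp add: blk_0)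
    finally show "blk B l (X k - X (k - dd l)) = (\<Sum>h\<in>{1..\<tau>}. if h \<le> dd l then blk B l (u h) else 0)" .
  qed
  also have "\<dots> = (\<Sum>h\<in>{1..\<tau>}. \<Sum>l\<in>{1..m}. if h \<le> dd l then blk B l (u h) else 0)"
    by (rule sum.swap)
  also have "\<dots> = (\<Sum>h\<in>{1..\<tau>}. \<Sum>l\<in>{l\<in>{1..m}. h \<le> dd l}. blk B l (u h))"
    by (intro sum.cong refl sum.inter_filter[symmetric]) simp
  finally have "norm (X k - (\<Sum>l\<in>{1..m}. blk B l (X (k - dd l))))
      \<le> (\<Sum>h\<in>{1..\<tau>}. norm (\<Sum>l\<in>{l\<in>{1..m}. h \<le> dd l}. blk B l (u h)))"
    by (simp add: norm_sum)
  also have "\<dots> \<le> (\<Sum>h\<in>{1..\<tau>}. norm (u h))"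
    by (intro sum_mono norm_sum_blk_le) auto
  finally show ?thesis
    by (simp add: u_def norm_minus_commute)
qed

lemma Lyapunov_sum_shift:
  fixes Y :: "nat \<Rightarrow> 'a::real_normed_vector"
  assumes "1 \<le> \<tau>"
  shows "(\<Sum>h\<in>{1..\<tau>}. real (\<tau> - h + 1) * (norm (Y h - Y (h - 1)))\<^sup>2)
       = real \<tau> * (norm (Y 1 - Y 0))\<^sup>2 + (\<Sum>h\<in>{1..\<tau>}. real (\<tau> - h) * (norm (Y (Suc h) - Y h))\<^sup>2)"
proof -
  obtain t where t: "\<tau> = Suc t" using assms by (cases \<tau>) auto
  define F where "F h = real (\<tau> - h + 1) * (norm (Y h - Y (h - 1)))\<^sup>2" for h
  have "(\<Sum>h\<in>{1..\<tau>}. F h) = F 1 + (\<Sum>h\<in>{1..t}. F (Suc h))"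
    unfolding t by (simp add: sum.atLeast_Suc_atMost sum.shift_bounds_cl_Suc_ivl del: sum.cl_ivl_Suc)
  also have "(\<Sum>h\<in>{1..t}. F (Suc h)) = (\<Sum>h\<in>{1..t}. real (\<tau> - h) * (norm (Y (Suc h) - Y h))\<^sup>2)"
    by (intro sum.cong refl) (simp add: F_def t Suc_diff_le)
  also have "\<dots> = (\<Sum>h\<in>{1..\<tau>}. real (\<tau> - h) * (norm (Y (Suc h) - Y h))\<^sup>2)"
    unfolding t by simp
  finally show ?thesis
    using assms by (simp add: F_def of_nat_diff)
qed

lemma inner_le_Young_sum:
  fixes e v :: "'a::real_inner"
  assumes e: "norm e \<le> K * (\<Sum>h\<in>H. D h)" and K: "0 \<le> K" and s: "0 < s"
  shows "e \<bullet> v \<le> K * s / 2 * (\<Sum>h\<in>H. (D h)\<^sup>2) + K * real (card H) / (2 * s) * (norm v)\<^sup>2"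
proof -
  have AM_GM: "K * (D h * norm v) \<le> K * (s / 2 * (D h)\<^sup>2 + (norm v)\<^sup>2 / (2 * s))" for h
  proof -
    have "0 \<le> (s * D h - norm v)\<^sup>2 / (2 * s)" using s by simp
    also have "\<dots> = s / 2 * (D h)\<^sup>2 + (norm v)\<^sup>2 / (2 * s) - D h * norm v"
      using s by (simp add: field_simps power2_eq_square)
    finally show ?thesis using K by (intro mult_left_mono) simp_all
  qed
  have "e \<bullet> v \<le> norm e * norm v" by (rule norm_cauchy_schwarz)
  also have "\<dots> \<le> K * (\<Sum>h\<in>H. D h) * norm v" using e by (simp add: mult_right_mono)
  also have "\<dots> = (\<Sum>h\<in>H. K * (D h * norm v))"
    by (simp add: sum_distrib_left sum_distrib_right mult.assoc)
  also have "\<dots> \<le> (\<Sum>h\<in>H. K * (s / 2 * (D h)\<^sup>2 + (norm v)\<^sup>2 / (2 * s)))"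
    by (intro sum_mono AM_GM)
  also have "\<dots> = K * s / 2 * (\<Sum>h\<in>H. (D h)\<^sup>2) + K * real (card H) / (2 * s) * (norm v)\<^sup>2"
    by (simp add: sum.distrib sum_distrib_left algebra_simps)
  finally show ?thesis .
qed

text \<open>Young's inequality with weight \<open>sqrt m\<close>: the error \<open>e \<bullet> \<Delta> i\<close> costs \<open>\<tau> (norm (\<Delta> i))\<^sup>2\<close>, which
  the step size pays for, plus the squared increments \<open>(D h)\<^sup>2\<close>, which the Lyapunov weights pay for.\<close>
lemma (in block_partition) averaged_descent_terms_nonpos:
  assumes m: "1 \<le> m" and K: "0 \<le> K"
    and \<Delta>: "\<forall>i\<in>{1..m}. \<Delta> i \<in> span (B i)"
    and e: "norm e \<le> K * (\<Sum>h\<in>{1..\<tau>}. D h)"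
  shows "1 / real m * (\<Sum>i\<in>{1..m}. - (norm (\<Delta> i))\<^sup>2 / (2 * \<gamma> i) + Lc i / 2 * (norm (\<Delta> i))\<^sup>2
            + e \<bullet> \<Delta> i + K / (2 * sqrt (real m)) * (real \<tau> * (norm (\<Delta> i))\<^sup>2 - (\<Sum>h\<in>{1..\<tau>}. (D h)\<^sup>2)))
      + 1 / (2 * real m) * (\<Sum>i\<in>{1..m}. (1 / \<gamma> i - Lc i - 2 * K * real \<tau> / sqrt (real m)) * (norm (\<Delta> i))\<^sup>2)
    \<le> 0"
proof -
  define s where "s = sqrt (real m)"
  define S where "S = (\<Sum>h\<in>{1..\<tau>}. (D h)\<^sup>2)"
  define V where "V = (\<Sum>i\<in>{1..m}. \<Delta> i)"
  have s: "0 < s" "s * s = real m" unfolding s_def using m by simp_all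
  define q where "q i = e \<bullet> \<Delta> i - K * real \<tau> / (2 * s) * (norm (\<Delta> i))\<^sup>2 - K / (2 * s) * S" for i
  have "(\<Sum>i\<in>{1..m}. q i) = e \<bullet> V - K * real \<tau> / (2 * s) * (norm V)\<^sup>2 - real m * (K / (2 * s) * S)"
    unfolding q_def V_def norm_sq_sum_blocks[OF \<Delta>] inner_sum_right
    by (simp add: sum_subtractf sum_distrib_left)
  also have "real m * (K / (2 * s) * S) = K * s / 2 * S"
    using s by (simp add: field_simps flip: s(2))
  also have "e \<bullet> V - K * real \<tau> / (2 * s) * (norm V)\<^sup>2 - K * s / 2 * S \<le> 0"
    using inner_le_Young_sum[OF e K s(1), of V] unfolding S_def by simp
  finally have "(\<Sum>i\<in>{1..m}. q i) \<le> 0" .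
  define a where "a i = - (norm (\<Delta> i))\<^sup>2 / (2 * \<gamma> i) + Lc i / 2 * (norm (\<Delta> i))\<^sup>2 + e \<bullet> \<Delta> i
      + K / (2 * s) * (real \<tau> * (norm (\<Delta> i))\<^sup>2 - S)" for i
  define c where "c i = (1 / \<gamma> i - Lc i - 2 * K * real \<tau> / s) * (norm (\<Delta> i))\<^sup>2" for i
  have "1 / real m * (\<Sum>i\<in>{1..m}. a i) + 1 / (2 * real m) * (\<Sum>i\<in>{1..m}. c i)
      = 1 / real m * (\<Sum>i\<in>{1..m}. a i + c i / 2)"
    using m by (simp add: sum.distrib sum_divide_distrib[symmetric] sum_distrib_left[symmetric] sum_distrib_right[symmetric] field_simps)
  also have "\<dots> = 1 / real m * (\<Sum>i\<in>{1..m}. q i)"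
    by (intro arg_cong[where f="\<lambda>t. 1 / real m * t"] sum.cong refl)
      (use s in \<open>simp add: a_def c_def q_def field_simps\<close>)
  also have "\<dots> \<le> 0"
    using \<open>(\<Sum>i\<in>{1..m}. q i) \<le> 0\<close> by (simp add: divide_nonpos_nonneg)
  finally show ?thesis
    unfolding a_def c_def s_def S_def .
qed

text \<open>The left-hand side is the average of the \<open>\<Phi> i\<close> in the encoding of \<open>cond_exp_lb\<close>.\<close>
lemma ereal_average_le:
  fixes \<Phi> :: "nat \<Rightarrow> ereal" and \<Phi>o :: ereal and a :: "nat \<Rightarrow> real"
  assumes fin: "finite S" and ne: "S \<noteq> {}"
    and lb: "\<And>i. i \<in> S \<Longrightarrow> ereal cb \<le> \<Phi> i"
    and ub: "\<And>i. i \<in> S \<Longrightarrow> \<Phi> i \<le> \<Phi>o + ereal (a i)"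
    and avg: "1 / real (card S) * (\<Sum>i\<in>S. a i) + C \<le> 0"
  shows "ereal cb + enn2ereal (\<Sum>i\<in>S. e2ennreal (\<Phi> i - ereal cb) * ennreal (1 / real (card S))) + ereal C \<le> \<Phi>o"
proof (cases \<Phi>o)
  case PInf
  then show ?thesis by simp
next
  case MInf
  obtain i where i: "i \<in> S" using ne by blast
  have "ereal cb \<le> \<Phi>o + ereal (a i)" using lb[OF i] ub[OF i] by (rule order_trans)
  then show ?thesis using MInf by simp
next
  case (real q)
  define n where "n = real (card S)"
  have n: "0 < n" unfolding n_def using fin ne by (simp add: card_gt_0_iff)
  define p where "p i = real_of_ereal (\<Phi> i)" for i
  have p: "\<Phi> i = ereal (p i) \<and> cb \<le> p i \<and> p i \<le> q + a i" if i: "i \<in> S" for i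
  proof -
    have "ereal cb \<le> \<Phi> i" "\<Phi> i \<le> ereal (q + a i)" using lb[OF i] ub[OF i] real by simp_all
    then show ?thesis unfolding p_def by (cases "\<Phi> i") simp_all
  qed
  have "(\<Sum>i\<in>S. e2ennreal (\<Phi> i - ereal cb) * ennreal (1 / n)) = (\<Sum>i\<in>S. ennreal ((p i - cb) / n))"
    using p n by (intro sum.cong refl) (simp add: ennreal_mult[symmetric])
  also have "\<dots> = ennreal (\<Sum>i\<in>S. (p i - cb) / n)"
    using p n by (intro sum_ennreal) simp
  finally have "enn2ereal (\<Sum>i\<in>S. e2ennreal (\<Phi> i - ereal cb) * ennreal (1 / n))
      = ereal (\<Sum>i\<in>S. (p i - cb) / n)"
    using p n by (simp add: sum_nonneg)
  moreover have "(\<Sum>i\<in>S. (p i - cb) / n) = (\<Sum>i\<in>S. p i) / n - cb"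
    using n unfolding n_def by (simp add: sum_subtractf sum_divide_distrib[symmetric] diff_divide_distrib)
  moreover have "(\<Sum>i\<in>S. p i) \<le> n * q + (\<Sum>i\<in>S. a i)"
    using sum_mono[of S p "\<lambda>i. q + a i"] p unfolding n_def by (simp add: sum.distrib)
  then have "(\<Sum>i\<in>S. p i) / n \<le> q + 1 / n * (\<Sum>i\<in>S. a i)"
    using n by (simp add: field_simps)
  ultimately show ?thesis
    using avg real unfolding n_def by simp
qed

lemma Psi_le_Phi_s:
  assumes "0 \<le> Mc"
  shows "Psi B m f r (y 0) \<le> Phi_s B m f r Mc \<tau> y"
proof -
  have "0 \<le> Mc / (2 * sqrt (real m)) * (\<Sum>h\<in>{1..\<tau>}. real (\<tau> - h + 1) * (norm (y h - y (h - 1)))\<^sup>2)"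
    using assms by (intro mult_nonneg_nonneg sum_nonneg) auto
  then show ?thesis
    unfolding Phi_s_def by (intro ereal_le_add_self) simp
qed

section \<open>Conditional expectation under a uniformly drawn block\<close>

lemma (in sigma_finite_subalgebra) nn_cond_exp_sum_finite:
  assumes "finite S" and "\<And>i. i \<in> S \<Longrightarrow> h i \<in> borel_measurable M"
  shows "AE x in M. nn_cond_exp M F (\<lambda>x. \<Sum>i\<in>S. h i x) x = (\<Sum>i\<in>S. nn_cond_exp M F (h i) x)"
  using assms
proof (induction S rule: finite_induct)
  case empty
  show ?case using nn_cond_exp_F_meas[of "\<lambda>_. 0"] by (auto elim: AE_mp)
next
  case (insert a S)
  have "AE x in M. nn_cond_exp M F (h a) x + nn_cond_exp M F (\<lambda>x. \<Sum>i\<in>S. h i x) x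
      = nn_cond_exp M F (\<lambda>x. h a x + (\<Sum>i\<in>S. h i x)) x"
    using insert.prems by (intro nn_cond_exp_sum) auto
  with insert show ?case by (auto elim!: AE_mp)
qed

lemma (in prob_space) nn_cond_exp_indicator_indep:
  assumes sf: "sigma_finite_subalgebra M F"
    and J: "J \<in> M \<rightarrow>\<^sub>M count_space UNIV"
    and indep: "indep_set (sets (vimage_algebra (space M) J (count_space UNIV))) (sets F)"
  shows "AE \<eta> in M. nn_cond_exp M F (indicator (J -` {i} \<inter> space M)) \<eta>
    = ennreal (prob (J -` {i} \<inter> space M))"
proof -
  interpret F: sigma_finite_subalgebra M F by (rule sf)
  define E where "E = J -` {i} \<inter> space M"
  have E_J: "E \<in> sets (vimage_algebra (space M) J (count_space UNIV))"
    unfolding E_def using J by (subst sets_vimage_algebra2) (auto simp: measurable_def)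
  have E: "E \<in> sets M" unfolding E_def using J by (simp add: measurable_sets)
  have "AE \<eta> in M. ennreal (prob E) = nn_cond_exp M F (indicator E) \<eta>"
  proof (rule F.nn_cond_exp_charact)
    fix A assume A_F: "A \<in> sets F"
    then have A: "A \<in> sets M" using F.subalg by (auto simp: subalgebra_def)
    have "(\<integral>\<^sup>+ x \<in> A. indicator E x \<partial>M) = emeasure M (E \<inter> A)"
      using A E by (simp add: nn_integral_indicator[symmetric] indicator_inter_arith mult.commute)
    also have "\<dots> = ennreal (prob E * prob A)"
      using indep A_F E_J unfolding indep_sets2_eq by (simp add: emeasure_eq_measure)
    also have "\<dots> = (\<integral>\<^sup>+ x \<in> A. ennreal (prob E) \<partial>M)"
      using A by (simp add: ennreal_mult emeasure_eq_measure nn_integral_cmult_indicator)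
    finally show "(\<integral>\<^sup>+ x \<in> A. indicator E x \<partial>M) = (\<integral>\<^sup>+ x \<in> A. ennreal (prob E) \<partial>M)" .
  qed (use E in simp_all)
  then show ?thesis unfolding E_def by (auto elim: AE_mp)
qed

lemma (in prob_space) nn_cond_exp_mult_indicator_indep:
  assumes sf: "sigma_finite_subalgebra M F"
    and J: "J \<in> M \<rightarrow>\<^sub>M count_space UNIV"
    and indep: "indep_set (sets (vimage_algebra (space M) J (count_space UNIV))) (sets F)"
    and Z: "Z \<in> borel_measurable F"
  shows "AE \<eta> in M. nn_cond_exp M F (\<lambda>\<eta>. Z \<eta> * indicator (J -` {i} \<inter> space M) \<eta>) \<eta>
    = Z \<eta> * ennreal (prob (J -` {i} \<inter> space M))"
proof -
  interpret F: sigma_finite_subalgebra M F by (rule sf)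
  have "J -` {i} \<inter> space M \<in> sets M" using J by (simp add: measurable_sets)
  then have "AE \<eta> in M. Z \<eta> * nn_cond_exp M F (indicator (J -` {i} \<inter> space M)) \<eta>
      = nn_cond_exp M F (\<lambda>\<eta>. Z \<eta> * indicator (J -` {i} \<inter> space M) \<eta>) \<eta>"
    using Z by (intro F.nn_cond_exp_prod) simp_all
  with nn_cond_exp_indicator_indep[OF sf J indep, of i] show ?thesis
    by eventually_elim simp
qed

lemma (in prob_space) nn_cond_exp_uniform_selection:
  assumes F: "subalgebra M F"
    and J: "J \<in> M \<rightarrow>\<^sub>M count_space UNIV"
    and indep: "indep_set (sets (vimage_algebra (space M) J (count_space UNIV))) (sets F)"
    and unif: "distr M (count_space UNIV) J = measure_pmf (pmf_of_set I)"
    and I: "finite I" "I \<noteq> {}"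
    and Z: "\<And>i. i \<in> I \<Longrightarrow> Z i \<in> borel_measurable F"
    and Y: "Y \<in> borel_measurable M"
    and select: "AE \<eta> in M. Y \<eta> = Z (J \<eta>) \<eta>"
  shows "AE \<eta> in M. nn_cond_exp M F Y \<eta> = (\<Sum>i\<in>I. Z i \<eta> * ennreal (1 / real (card I)))"
proof -
  interpret F: sigma_finite_subalgebra M F
    by (rule finite_measure_subalgebra_is_sigma_finite) (unfold_locales, rule F)
  define E where "E i = J -` {i} \<inter> space M" for i
  have ZE: "(\<lambda>\<eta>. Z i \<eta> * indicator (E i) \<eta>) \<in> borel_measurable M" if "i \<in> I" for i
    using measurable_from_subalg[OF F Z[OF that]] measurable_sets[OF J, of "{i}"]
    unfolding E_def by measurable
  have prob_E: "prob (E i) = 1 / real (card I)" if "i \<in> I" for i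
    using measure_distr[OF J, of "{i}"] that I unfolding unif E_def by (simp add: measure_pmf_of_set)
  have "AE \<eta> in M. J \<eta> \<in> I"
    using AE_distrD[OF J, of "\<lambda>i. i \<in> I"] I unfolding unif
    by (simp add: AE_measure_pmf_iff set_pmf_of_set)
  with select AE_space have "AE \<eta> in M. Y \<eta> = (\<Sum>i\<in>I. Z i \<eta> * indicator (E i) \<eta>)"
  proof eventually_elim
    case (elim \<eta>)
    have "(\<Sum>i\<in>I. Z i \<eta> * indicator (E i) \<eta>) = (\<Sum>i\<in>I. if i = J \<eta> then Z i \<eta> else 0)"
      using elim by (intro sum.cong refl) (auto simp: E_def)
    then show ?case using elim I(1) by simp
  qed
  then have "AE \<eta> in M. nn_cond_exp M F Y \<eta> = nn_cond_exp M F (\<lambda>\<eta>. \<Sum>i\<in>I. Z i \<eta> * indicator (E i) \<eta>) \<eta>"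
    using Y ZE by (intro F.nn_cond_exp_cong) auto
  moreover have "AE \<eta> in M. nn_cond_exp M F (\<lambda>\<eta>. \<Sum>i\<in>I. Z i \<eta> * indicator (E i) \<eta>) \<eta>
      = (\<Sum>i\<in>I. nn_cond_exp M F (\<lambda>\<eta>. Z i \<eta> * indicator (E i) \<eta>) \<eta>)"
    using I(1) ZE by (rule F.nn_cond_exp_sum_finite)
  moreover have "AE \<eta> in M. \<forall>i\<in>I. nn_cond_exp M F (\<lambda>\<eta>. Z i \<eta> * indicator (E i) \<eta>) \<eta>
      = Z i \<eta> * ennreal (1 / real (card I))"
  proof (rule AE_finite_allI[OF I(1)])
    fix i assume i: "i \<in> I"
    show "AE \<eta> in M. nn_cond_exp M F (\<lambda>\<eta>. Z i \<eta> * indicator (E i) \<eta>) \<eta>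
        = Z i \<eta> * ennreal (1 / real (card I))"
      using nn_cond_exp_mult_indicator_indep[OF F.sigma_finite_subalgebra_axioms J indep Z[OF i], of i]
      unfolding E_def[symmetric] prob_E[OF i] .
  qed
  ultimately show ?thesis
    by eventually_elim simp
qed

lemma space_nat_filtration [simp]: "space (nat_filtration M X k) = space M"
  unfolding nat_filtration_def by (rule space_measure_of) auto

lemma sets_nat_filtration:
  "sets (nat_filtration M X k)
    = sigma_sets (space M) {X i -` A \<inter> space M | i A. i \<in> {1..k} \<and> A \<in> sets borel}"
  unfolding nat_filtration_def by (rule sets_measure_of) auto

lemma measurable_nat_filtration:
  assumes "i \<in> {1..k}"
  shows "X i \<in> borel_measurable (nat_filtration M X k)"
proof (rule measurableI)
  fix A :: "'b set" assume "A \<in> sets borel"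
  then have "X i -` A \<inter> space M \<in> {X i -` A \<inter> space M | i A. i \<in> {1..k} \<and> A \<in> sets borel}"
    using assms by blast
  then show "X i -` A \<inter> space (nat_filtration M X k) \<in> sets (nat_filtration M X k)"
    unfolding sets_nat_filtration space_nat_filtration by (rule sigma_sets.Basic)
qed simp

lemma (in block_partition) measurable_r_blk:
  assumes i: "i \<in> {1..m}" and lsc: "lsc_on (span (B i)) \<rho>" and proper: "proper_on (span (B i)) \<rho>"
  shows "(\<lambda>x. \<rho> (blk B i x)) \<in> borel_measurable borel"
proof (rule borel_measurableI_le)
  fix y :: ereal
  show "{x \<in> space borel. \<rho> (blk B i x) \<le> y} \<in> sets borel"
  proof (cases y)
    case (real t)
    have "closed (blk B i -` {u \<in> span (B i). \<rho> u \<le> ereal t})"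
      using lsc unfolding lsc_on_def by (intro continuous_closed_vimage continuous_blk) blast
    moreover have "{x \<in> space borel. \<rho> (blk B i x) \<le> y} = blk B i -` {u \<in> span (B i). \<rho> u \<le> ereal t}"
      using real by (auto simp: blk_in_span)
    ultimately show ?thesis by simp
  next
    case MInf
    then have "{x \<in> space borel. \<rho> (blk B i x) \<le> y} = {}"
      using proper blk_in_span unfolding proper_on_def by auto
    then show ?thesis by simp
  qed simp
qed

lemma measurable_Phi_s:
  assumes f: "f \<in> borel_measurable borel"
    and r: "\<And>l. l \<in> {1..m} \<Longrightarrow> (\<lambda>x. r l (blk B l x)) \<in> borel_measurable borel"
    and Y: "\<And>h. Y h \<in> borel_measurable N"
  shows "(\<lambda>\<eta>. Phi_s B m f r Mc \<tau> (\<lambda>h. Y h \<eta>)) \<in> borel_measurable N"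
  unfolding Phi_s_def Psi_def rsum_def
proof (intro borel_measurable_ereal_add borel_measurable_ereal borel_measurable_ereal_sum)
  note Y[measurable]
  show "(\<lambda>\<eta>. f (Y 0 \<eta>)) \<in> borel_measurable N"
    using measurable_compose[OF Y f] .
  show "(\<lambda>\<eta>. r l (blk B l (Y 0 \<eta>))) \<in> borel_measurable N" if "l \<in> {1..m}" for l
    using measurable_compose[OF Y r[OF that]] .
  show "(\<lambda>\<eta>. Mc / (2 * sqrt (real m)) * (\<Sum>h\<in>{1..\<tau>}. real (\<tau> - h + 1) * (norm (Y h \<eta> - Y (h - 1) \<eta>))\<^sup>2))
      \<in> borel_measurable N"
    by measurable
qed

section \<open>The stochastic asynchronous PALM iteration\<close>

locale stochastic_async_palm = block_partition B m + prob_space M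
  for B :: "nat \<Rightarrow> 'a::euclidean_space set" and m :: nat and M :: "'w measure" +
  fixes \<tau> :: nat and f :: "'a \<Rightarrow> real" and g :: "'a \<Rightarrow> 'a" and r :: "nat \<Rightarrow> 'a \<Rightarrow> ereal"
    and cb lam c Mc :: real and L :: "nat \<Rightarrow> 'a \<Rightarrow> real" and \<zeta> :: "nat \<Rightarrow> 'a \<Rightarrow> real \<Rightarrow> 'a"
    and x0 :: 'a and x :: "nat \<Rightarrow> 'w \<Rightarrow> 'a" and j :: "nat \<Rightarrow> 'w \<Rightarrow> nat"
    and d :: "nat \<Rightarrow> 'w \<Rightarrow> nat \<Rightarrow> nat"
  assumes m_pos: "1 \<le> m" and tau_pos: "1 \<le> \<tau>"
    and grad: "\<forall>z. (f has_derivative (\<lambda>h. g z \<bullet> h)) (at z)"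
    and grad_cont: "continuous_on UNIV g"
    and r_proper: "\<forall>i\<in>{1..m}. proper_on (span (B i)) (r i)"
    and r_lsc: "\<forall>i\<in>{1..m}. lsc_on (span (B i)) (r i)"
    and bdd_below: "\<forall>z. ereal cb \<le> Psi B m f r z"
    and lam_pos: "0 < lam"
    and L_pos: "\<forall>i\<in>{1..m}. \<forall>z. 0 < L i z"
    and L_lip: "\<forall>i\<in>{1..m}. \<forall>z y y'. y \<in> span (B i) \<longrightarrow> y' \<in> span (B i) \<longrightarrow>
            norm (blk B i (g (repl B i z y)) - blk B i (g (repl B i z y')))
              \<le> L i (z - blk B i z) * norm (y - y')"
    and L_meas: "\<forall>i\<in>{1..m}. L i \<in> borel_measurable borel"
    and \<zeta>_meas: "\<forall>i\<in>{1..m}. (\<lambda>(v, \<gamma>). \<zeta> i v \<gamma>) \<in> borel_measurable (borel \<Otimes>\<^sub>M borel)"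
    and \<zeta>_prox: "\<forall>i\<in>{1..m}. \<forall>v\<in>span (B i). \<forall>\<gamma>>0. \<zeta> i v \<gamma> \<in> span (B i) \<and>
            (\<forall>u\<in>span (B i). r i (\<zeta> i v \<gamma>) + ereal ((norm (\<zeta> i v \<gamma> - v))\<^sup>2 / (2 * \<gamma>))
                             \<le> r i u + ereal ((norm (u - v))\<^sup>2 / (2 * \<gamma>)))"
    and c_pos: "0 < c" and Mc_pos: "0 < Mc"
    and delays: "\<forall>k \<omega> i. d k \<omega> i \<le> \<tau>"
    and x_init: "\<forall>\<omega>\<in>space M. x 0 \<omega> = x0"
    and x_step: "\<forall>\<omega>\<in>space M. \<forall>k. x (Suc k) \<omega> =
            repl B (j k \<omega>) (x k \<omega>) (wblk B m g \<zeta> L c Mc \<tau> lam x d k \<omega> (j k \<omega>))"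
    and j_rv: "\<forall>k. j k \<in> M \<rightarrow>\<^sub>M count_space UNIV"
    and j_unif: "\<forall>k. distr M (count_space UNIV) (j k) = measure_pmf (pmf_of_set {1..m})"
    and j_indep: "\<forall>k. indep_set (sets (vimage_algebra (space M) (j k) (count_space UNIV)))
            (sets (nat_filtration M x k))"
    and delayed_meas: "\<forall>k. delayed B m x d k \<in> borel_measurable (nat_filtration M x k)"
    and S4: "AE \<omega> in M. \<forall>k. norm (g (x k \<omega>) - g (delayed B m x d k \<omega>))
            \<le> Mc * norm (x k \<omega> - delayed B m x d k \<omega>)"
begin

abbreviation "stepsize k \<omega> i \<equiv> gam B m L c Mc \<tau> lam x d k \<omega> i"
abbreviation "prox_step k \<omega> i \<equiv> wblk B m g \<zeta> L c Mc \<tau> lam x d k \<omega> i"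

text \<open>The history (x^{k+1}, x^k, ..., x^{k-\<tau>+1}) that results if block i is drawn at step k.\<close>
definition trial_history :: "nat \<Rightarrow> nat \<Rightarrow> 'w \<Rightarrow> nat \<Rightarrow> 'a" where
  "trial_history k i \<omega> h = (if h = 0 then repl B i (x k \<omega>) (prox_step k \<omega> i) else x (k + 1 - h) \<omega>)"

lemma stepsize_pos: "i \<in> {1..m} \<Longrightarrow> 0 < stepsize k \<omega> i"
  using L_pos c_pos Mc_pos lam_pos unfolding gam_def Let_def
  by (simp add: add_pos_nonneg)

lemma prox_step_prox:
  fixes k :: nat and \<omega> :: 'w
  assumes i: "i \<in> {1..m}"
  defines "v \<equiv> blk B i (x k \<omega>) - stepsize k \<omega> i *\<^sub>R blk B i (g (delayed B m x d k \<omega>))"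
  shows "prox_step k \<omega> i \<in> span (B i)"
    and "r i (prox_step k \<omega> i) + ereal ((norm (prox_step k \<omega> i - v))\<^sup>2 / (2 * stepsize k \<omega> i))
      \<le> r i (blk B i (x k \<omega>)) + ereal ((norm (blk B i (x k \<omega>) - v))\<^sup>2 / (2 * stepsize k \<omega> i))"
proof -
  have "v \<in> span (B i)" unfolding v_def by (intro span_diff span_scale blk_in_span)
  then have "\<zeta> i v (stepsize k \<omega> i) \<in> span (B i) \<and>
      (\<forall>u\<in>span (B i). r i (\<zeta> i v (stepsize k \<omega> i)) + ereal ((norm (\<zeta> i v (stepsize k \<omega> i) - v))\<^sup>2 / (2 * stepsize k \<omega> i))
        \<le> r i u + ereal ((norm (u - v))\<^sup>2 / (2 * stepsize k \<omega> i)))"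
    using \<zeta>_prox i stepsize_pos[OF i] by blast
  moreover have "prox_step k \<omega> i = \<zeta> i v (stepsize k \<omega> i)"
    unfolding wblk_def Let_def v_def ..
  ultimately show "prox_step k \<omega> i \<in> span (B i)"
    and "r i (prox_step k \<omega> i) + ereal ((norm (prox_step k \<omega> i - v))\<^sup>2 / (2 * stepsize k \<omega> i))
      \<le> r i (blk B i (x k \<omega>)) + ereal ((norm (blk B i (x k \<omega>) - v))\<^sup>2 / (2 * stepsize k \<omega> i))"
    using blk_in_span by auto
qed

lemma Phi_s_trial_history_le:
  fixes k :: nat and \<omega> :: 'w
  assumes i: "i \<in> {1..m}"
  defines "\<Delta> \<equiv> prox_step k \<omega> i - blk B i (x k \<omega>)"
    and "D \<equiv> \<lambda>h. norm (x (k - h) \<omega> - x (k - (h - 1)) \<omega>)"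
  shows "Phi_s B m f r Mc \<tau> (trial_history k i \<omega>) \<le> Phi_s B m f r Mc \<tau> (\<lambda>h. x (k - h) \<omega>)
    + ereal (- (norm \<Delta>)\<^sup>2 / (2 * stepsize k \<omega> i) + L i (x k \<omega> - blk B i (x k \<omega>)) / 2 * (norm \<Delta>)\<^sup>2
      + (g (x k \<omega>) - g (delayed B m x d k \<omega>)) \<bullet> \<Delta>
      + Mc / (2 * sqrt (real m)) * (real \<tau> * (norm \<Delta>)\<^sup>2 - (\<Sum>h\<in>{1..\<tau>}. (D h)\<^sup>2)))"
proof -
  define K where "K = Mc / (2 * sqrt (real m))"
  define S where "S = (\<Sum>h\<in>{1..\<tau>}. (D h)\<^sup>2)"
  define T where "T = (\<Sum>h\<in>{1..\<tau>}. real (\<tau> - h) * (D h)\<^sup>2)"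
  have w: "prox_step k \<omega> i \<in> span (B i)" by (rule prox_step_prox(1)[OF i])
  have "Psi B m f r (repl B i (x k \<omega>) (prox_step k \<omega> i)) \<le> Psi B m f r (x k \<omega>)
      + ereal (- (norm \<Delta>)\<^sup>2 / (2 * stepsize k \<omega> i) + L i (x k \<omega> - blk B i (x k \<omega>)) / 2 * (norm \<Delta>)\<^sup>2
        + (g (x k \<omega>) - g (delayed B m x d k \<omega>)) \<bullet> \<Delta>)"
    unfolding \<Delta>_def using grad L_lip i
    by (intro Psi_repl_le stepsize_pos w prox_step_prox(2)) auto
  moreover have "Phi_s B m f r Mc \<tau> (trial_history k i \<omega>)
      = Psi B m f r (repl B i (x k \<omega>) (prox_step k \<omega> i)) + ereal (K * (real \<tau> * (norm \<Delta>)\<^sup>2 + T))"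
    using Lyapunov_sum_shift[OF tau_pos, of "trial_history k i \<omega>"] repl_eq[OF i w]
    unfolding Phi_s_def K_def T_def D_def \<Delta>_def
    by (simp add: trial_history_def norm_minus_commute algebra_simps)
  moreover have "Phi_s B m f r Mc \<tau> (\<lambda>h. x (k - h) \<omega>) = Psi B m f r (x k \<omega>) + ereal (K * (S + T))"
    unfolding Phi_s_def K_def S_def T_def D_def
    by (simp add: sum.distrib[symmetric] algebra_simps)
  ultimately show ?thesis
    unfolding K_def[symmetric] S_def[symmetric]
    by (cases "Psi B m f r (x k \<omega>)"; cases "Psi B m f r (repl B i (x k \<omega>) (prox_step k \<omega> i))")
      (simp_all add: algebra_simps)
qed

lemma cb_le_Phi_s: "ereal cb \<le> Phi_s B m f r Mc \<tau> y"
  using bdd_below Psi_le_Phi_s[of Mc] Mc_pos order_trans by fastforce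

lemma expected_descent_pointwise:
  assumes S4_at: "norm (g (x k \<omega>) - g (delayed B m x d k \<omega>)) \<le> Mc * norm (x k \<omega> - delayed B m x d k \<omega>)"
  shows "ereal cb + enn2ereal (\<Sum>i\<in>{1..m}. e2ennreal (Phi_s B m f r Mc \<tau> (trial_history k i \<omega>) - ereal cb)
        * ennreal (1 / real (card {1..m})))
      + ereal (1 / (2 * real m) * (\<Sum>i\<in>{1..m}.
          (1 / stepsize k \<omega> i - L i (x k \<omega> - blk B i (x k \<omega>)) - 2 * Mc * real \<tau> / sqrt (real m))
          * (norm (prox_step k \<omega> i - blk B i (x k \<omega>)))\<^sup>2))
    \<le> Phi_s B m f r Mc \<tau> (\<lambda>h. x (k - h) \<omega>)"
proof -
  let ?D = "\<lambda>h. norm (x (k - h) \<omega> - x (k - (h - 1)) \<omega>)"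
  have "norm (x k \<omega> - delayed B m x d k \<omega>) \<le> (\<Sum>h\<in>{1..\<tau>}. ?D h)"
    unfolding delayed_def using delays by (intro norm_diff_delayed_le) auto
  then have "norm (g (x k \<omega>) - g (delayed B m x d k \<omega>)) \<le> Mc * (\<Sum>h\<in>{1..\<tau>}. ?D h)"
    using S4_at Mc_pos by (meson mult_left_mono less_imp_le order_trans)
  then show ?thesis
    using m_pos Mc_pos prox_step_prox(1)
    by (intro ereal_average_le[OF _ _ cb_le_Phi_s Phi_s_trial_history_le];
        (simp only: card_atLeastAtMost diff_Suc_1)?;
        (intro averaged_descent_terms_nonpos)?; auto intro: span_diff blk_in_span)
qed

lemma subalgebra_filtration: "subalgebra M (nat_filtration M x k)"
  unfolding subalgebra_def using indep_setD_ev2[OF j_indep[rule_format, of k]] by simp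

lemma measurable_x_filtration:
  assumes "n \<le> k"
  shows "x n \<in> borel_measurable (nat_filtration M x k)"
proof (cases "n = 0")
  case True
  then show ?thesis
    using x_init by (subst measurable_cong[where g="\<lambda>_. x0"]) auto
next
  case False
  then show ?thesis using assms by (intro measurable_nat_filtration) simp
qed

lemma measurable_prox_step:
  assumes i: "i \<in> {1..m}"
  shows "(\<lambda>\<omega>. prox_step k \<omega> i) \<in> borel_measurable (nat_filtration M x k)"
proof -
  note [measurable] = measurable_x_filtration[of k k, simplified] delayed_meas[rule_format, of k]
    borel_measurable_continuous_onI[OF grad_cont] L_meas[rule_format, OF i]
  have \<gamma>: "(\<lambda>\<omega>. stepsize k \<omega> i) \<in> borel_measurable (nat_filtration M x k)"
    unfolding gam_def Let_def by measurable
  have "(\<lambda>\<omega>. blk B i (x k \<omega>) - stepsize k \<omega> i *\<^sub>R blk B i (g (delayed B m x d k \<omega>)))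
      \<in> borel_measurable (nat_filtration M x k)"
    using \<gamma> by measurable
  from measurable_compose[OF measurable_Pair[OF this \<gamma>] \<zeta>_meas[rule_format, OF i]]
  show ?thesis
    unfolding wblk_def Let_def by simp
qed

lemma measurable_Phi_s_history:
  assumes "\<And>h. Y h \<in> borel_measurable N"
  shows "(\<lambda>\<eta>. Phi_s B m f r Mc \<tau> (\<lambda>h. Y h \<eta>)) \<in> borel_measurable N"
proof (rule measurable_Phi_s[OF _ _ assms])
  show "f \<in> borel_measurable borel"
    using grad has_derivative_continuous
    by (intro borel_measurable_continuous_onI continuous_at_imp_continuous_on) blast
  show "(\<lambda>x. r l (blk B l x)) \<in> borel_measurable borel" if "l \<in> {1..m}" for l
    using that r_lsc r_proper by (intro measurable_r_blk) auto
qed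

lemma expected_descent:
  "AE \<omega> in M. cond_exp_lb M (nat_filtration M x k) cb (\<lambda>\<eta>. Phi_s B m f r Mc \<tau> (\<lambda>h. x (k + 1 - h) \<eta>)) \<omega>
      + ereal (1 / (2 * real m) * (\<Sum>i\<in>{1..m}.
          (1 / stepsize k \<omega> i - L i (x k \<omega> - blk B i (x k \<omega>)) - 2 * Mc * real \<tau> / sqrt (real m))
          * (norm (prox_step k \<omega> i - blk B i (x k \<omega>)))\<^sup>2))
    \<le> Phi_s B m f r Mc \<tau> (\<lambda>h. x (k - h) \<omega>)"
proof -
  define Z where "Z i \<eta> = e2ennreal (Phi_s B m f r Mc \<tau> (trial_history k i \<eta>) - ereal cb)" for i \<eta>
  have Z: "Z i \<in> borel_measurable (nat_filtration M x k)" if i: "i \<in> {1..m}" for i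
  proof -
    note [measurable] = measurable_x_filtration[of k k, simplified] measurable_prox_step[OF i, of k]
    have "(\<lambda>\<eta>. repl B i (x k \<eta>) (prox_step k \<eta> i)) \<in> borel_measurable (nat_filtration M x k)"
      unfolding repl_def by measurable
    then have "(\<lambda>\<eta>. trial_history k i \<eta> h) \<in> borel_measurable (nat_filtration M x k)" for h
      using measurable_x_filtration[of "k + 1 - h" k] by (cases "h = 0") (simp_all add: trial_history_def)
    then show ?thesis
      unfolding Z_def by (intro measurable_compose[OF _ measurable_e2ennreal] borel_measurable_ereal_diff
          measurable_Phi_s_history) simp_all
  qed
  have "x n \<in> borel_measurable M" for n
    using measurable_from_subalg[OF subalgebra_filtration measurable_x_filtration[of n n]] by simp
  then have new: "(\<lambda>\<eta>. e2ennreal (Phi_s B m f r Mc \<tau> (\<lambda>h. x (k + 1 - h) \<eta>) - ereal cb)) \<in> borel_measurable M"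
    by (intro measurable_compose[OF _ measurable_e2ennreal] borel_measurable_ereal_diff
        measurable_Phi_s_history) simp_all
  have "AE \<eta> in M. e2ennreal (Phi_s B m f r Mc \<tau> (\<lambda>h. x (k + 1 - h) \<eta>) - ereal cb) = Z (j k \<eta>) \<eta>"
  proof (rule AE_I2)
    fix \<eta> assume "\<eta> \<in> space M"
    then have "(\<lambda>h. x (k + 1 - h) \<eta>) = trial_history k (j k \<eta>) \<eta>"
      using x_step by (auto simp: trial_history_def)
    then show "e2ennreal (Phi_s B m f r Mc \<tau> (\<lambda>h. x (k + 1 - h) \<eta>) - ereal cb) = Z (j k \<eta>) \<eta>"
      unfolding Z_def by simp
  qed
  then have "AE \<omega> in M. nn_cond_exp M (nat_filtration M x k)
      (\<lambda>\<eta>. e2ennreal (Phi_s B m f r Mc \<tau> (\<lambda>h. x (k + 1 - h) \<eta>) - ereal cb)) \<omega>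
      = (\<Sum>i\<in>{1..m}. Z i \<omega> * ennreal (1 / real (card {1..m})))"
    using m_pos j_rv j_indep j_unif
    by (intro nn_cond_exp_uniform_selection[OF subalgebra_filtration _ _ _ _ _ Z new]) auto
  with S4 show ?thesis
    by eventually_elim (use expected_descent_pointwise in \<open>simp add: cond_exp_lb_def Z_def\<close>)
qed

end

theorem mainTheorem3:
  fixes M :: "'w measure"
    and m \<tau> :: nat
    and B :: "nat \<Rightarrow> 'a::euclidean_space set"
    and f :: "'a \<Rightarrow> real" and g :: "'a \<Rightarrow> 'a"
    and r :: "nat \<Rightarrow> 'a \<Rightarrow> ereal"
    and cb lam c Mc :: real
    and L :: "nat \<Rightarrow> 'a \<Rightarrow> real"
    and \<zeta> :: "nat \<Rightarrow> 'a \<Rightarrow> real \<Rightarrow> 'a"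
    and x0 :: 'a
    and x :: "nat \<Rightarrow> 'w \<Rightarrow> 'a"
    and j :: "nat \<Rightarrow> 'w \<Rightarrow> nat"
    and d :: "nat \<Rightarrow> 'w \<Rightarrow> nat \<Rightarrow> nat"
  assumes prob: "prob_space M"
    and m_pos: "1 \<le> m" and tau_pos: "1 \<le> \<tau>"
    and blocks: "is_block_partition B m"
    and grad: "\<forall>z. (f has_derivative (\<lambda>h. g z \<bullet> h)) (at z)" and grad_cont: "continuous_on UNIV g"
    and r_proper: "\<forall>i\<in>{1..m}. proper_on (span (B i)) (r i)"
    and r_lsc: "\<forall>i\<in>{1..m}. lsc_on (span (B i)) (r i)"
    and bdd_below: "\<forall>z. ereal cb \<le> Psi B m f r z"
    and lam_pos: "0 < lam"
    and prox_bdd: "\<forall>z. \<forall>t. 0 < t \<and> t \<le> lam \<longrightarrow>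
            (\<exists>y. \<forall>u. rsum B m r y + ereal ((norm (z - y))\<^sup>2 / (2 * t))
                     \<le> rsum B m r u + ereal ((norm (z - u))\<^sup>2 / (2 * t)))"
    and L_pos: "\<forall>i\<in>{1..m}. \<forall>z. 0 < L i z"
    and L_lip: "\<forall>i\<in>{1..m}. \<forall>z y y'. y \<in> span (B i) \<longrightarrow> y' \<in> span (B i) \<longrightarrow>
            norm (blk B i (g (repl B i z y)) - blk B i (g (repl B i z y')))
              \<le> L i (z - blk B i z) * norm (y - y')"
    and S1: "\<forall>i\<in>{1..m}. L i \<in> borel_measurable borel"
    and S2_meas: "\<forall>i\<in>{1..m}. (\<lambda>(v, \<gamma>). \<zeta> i v \<gamma>) \<in> borel_measurable (borel \<Otimes>\<^sub>M borel)"
    and S2_prox: "\<forall>i\<in>{1..m}. \<forall>v\<in>span (B i). \<forall>\<gamma>>0. \<zeta> i v \<gamma> \<in> span (B i) \<and>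
            (\<forall>u\<in>span (B i). r i (\<zeta> i v \<gamma>) + ereal ((norm (\<zeta> i v \<gamma> - v))\<^sup>2 / (2 * \<gamma>))
                             \<le> r i u + ereal ((norm (u - v))\<^sup>2 / (2 * \<gamma>)))"
    and c_range: "0 < c" "c < 1" and Mc_pos: "0 < Mc"
    and delays: "\<forall>k \<omega> i. d k \<omega> i \<le> \<tau>"
    and x_init: "\<forall>\<omega>\<in>space M. x 0 \<omega> = x0"
    and x_step: "\<forall>\<omega>\<in>space M. \<forall>k. x (Suc k) \<omega> =
            repl B (j k \<omega>) (x k \<omega>) (wblk B m g \<zeta> L c Mc \<tau> lam x d k \<omega> (j k \<omega>))"
    and j_rv: "\<forall>k. j k \<in> M \<rightarrow>\<^sub>M count_space UNIV"
    and j_unif: "\<forall>k. distr M (count_space UNIV) (j k) = measure_pmf (pmf_of_set {1..m})"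
    and j_iid: "prob_space.indep_vars M (\<lambda>_. count_space UNIV) j UNIV"
    and j_indep_F: "\<forall>k. prob_space.indep_set M
            (sets (vimage_algebra (space M) (j k) (count_space UNIV)))
            (sets (nat_filtration M x k))"
    and delayed_meas: "\<forall>k. delayed B m x d k \<in> borel_measurable (nat_filtration M x k)"
    and S3: "\<exists>Lb>0. AE \<omega> in M. \<forall>k. \<forall>i\<in>{1..m}.
            L i (delayed B m x d k \<omega> - blk B i (delayed B m x d k \<omega>)) \<le> Lb"
    and S4: "AE \<omega> in M. \<forall>k. norm (g (x k \<omega>) - g (delayed B m x d k \<omega>))
            \<le> Mc * norm (x k \<omega> - delayed B m x d k \<omega>)"
  shows "\<forall>k. AE \<omega> in M.
           cond_exp_lb M (nat_filtration M x k) cb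
              (\<lambda>\<eta>. Phi_s B m f r Mc \<tau> (\<lambda>h. x (k + 1 - h) \<eta>)) \<omega>
           + ereal (1 / (2 * real m) * (\<Sum>i\<in>{1..m}.
                (1 / gam B m L c Mc \<tau> lam x d k \<omega> i - L i (x k \<omega> - blk B i (x k \<omega>))
                  - 2 * Mc * real \<tau> / sqrt (real m))
                * (norm (wblk B m g \<zeta> L c Mc \<tau> lam x d k \<omega> i - blk B i (x k \<omega>)))\<^sup>2))
         \<le> Phi_s B m f r Mc \<tau> (\<lambda>h. x (k - h) \<omega>)"
proof -
  interpret stochastic_async_palm B m M \<tau> f g r cb lam c Mc L \<zeta> x0 x j d
    using assms unfolding stochastic_async_palm_def stochastic_async_palm_axioms_def block_partition_def
    by blast
  show ?thesis
    using expected_descent by blast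
qed

end
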